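(* Let $a,b,g,h>0$ with $h>g+b+a$. Then the Minkowskian planar 4R linkage with these link lengths is of crank–superrocker type.
   Context: Link lengths: $a$ input crank, $b$ output crank, $g$ ground (fixed link), $h$ coupler. Put $T_1=g+b-h-a$, $T_2=a-g+b-h$, $T_3=g-a-b-h$, $T_4=g-a+b+h$, $T_5=a-h+g+b$. The input crank is a crank if $T_1T_2\ge0$ and $T_3T_4\le0$, a rocker if $T_1T_2<0$ and $T_3T_4\le0$, and a superrocker if $T_1T_2<0$ and $T_3T_4>0$. The output crank is a crank if $T_1\ge0$ and $T_4T_5\ge0$, a rocker if $T_1<0$ and $T_4T_5\ge0$, and a superrocker if $T_1<0$ and $T_4T_5<0$. The linkage is of type "X–Y" if its input crank is of type X and its output crank of type Y. *)

theory Defs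
  imports Main "HOL.Real"
begin

datatype crank_type = Crank | Rocker | Superrocker

text \<open>Grashof-type quantities for a (Minkowskian planar 4R) linkage with
input crank a, output crank b, ground g, coupler h.\<close>

definition T1 :: "real \<Rightarrow> real \<Rightarrow> real \<Rightarrow> real \<Rightarrow> real" where
  "T1 a b g h = g + b - h - a"
definition T2 :: "real \<Rightarrow> real \<Rightarrow> real \<Rightarrow> real \<Rightarrow> real" where
  "T2 a b g h = a - g + b - h"
definition T3 :: "real \<Rightarrow> real \<Rightarrow> real \<Rightarrow> real \<Rightarrow> real" where
  "T3 a b g h = g - a - b - h"
definition T4 :: "real \<Rightarrow> real \<Rightarrow> real \<Rightarrow> real \<Rightarrow> real" where
  "T4 a b g h = g - a + b + h"
definition T5 :: "real \<Rightarrow> real \<Rightarrow> real \<Rightarrow> real \<Rightarrow> real" where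
  "T5 a b g h = a - h + g + b"

definition input_type :: "real \<Rightarrow> real \<Rightarrow> real \<Rightarrow> real \<Rightarrow> crank_type option" where
  "input_type a b g h =
    (if T1 a b g h * T2 a b g h \<ge> 0 \<and> T3 a b g h * T4 a b g h \<le> 0 then Some Crank
     else if T1 a b g h * T2 a b g h < 0 \<and> T3 a b g h * T4 a b g h \<le> 0 then Some Rocker
     else if T1 a b g h * T2 a b g h < 0 \<and> T3 a b g h * T4 a b g h > 0 then Some Superrocker
     else None)"

definition output_type :: "real \<Rightarrow> real \<Rightarrow> real \<Rightarrow> real \<Rightarrow> crank_type option" where
  "output_type a b g h =
    (if T1 a b g h \<ge> 0 \<and> T4 a b g h * T5 a b g h \<ge> 0 then Some Crank
     else if T1 a b g h < 0 \<and> T4 a b g h * T5 a b g h \<ge> 0 then Some Rocker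
     else if T1 a b g h < 0 \<and> T4 a b g h * T5 a b g h < 0 then Some Superrocker
     else None)"

definition linkage_type :: "real \<Rightarrow> real \<Rightarrow> real \<Rightarrow> real \<Rightarrow> crank_type \<Rightarrow> crank_type \<Rightarrow> bool" where
  "linkage_type a b g h X Y \<longleftrightarrow> input_type a b g h = Some X \<and> output_type a b g h = Some Y"

end

theory Submission
  imports Defs
begin

text \<open>A coupler longer than the other three links together makes
  T1, T2, T3 and T5 negative and T4 positive; the sign conditions then select
  crank for the input and superrocker for the output.\<close>

lemma input_type_Crank_iff:
  "input_type a b g h = Some Crank \<longleftrightarrow>
     T1 a b g h * T2 a b g h \<ge> 0 \<and> T3 a b g h * T4 a b g h \<le> 0"
  by (simp add: input_type_def)

lemma output_type_Superrocker_iff: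
  "output_type a b g h = Some Superrocker \<longleftrightarrow>
     T1 a b g h < 0 \<and> T4 a b g h * T5 a b g h < 0"
  by (auto simp add: output_type_def)

theorem mainTheorem11:
  fixes a b g h :: real
  assumes "a > 0" and "b > 0" and "g > 0" and "h > 0"
    and "h > g + b + a"
  shows "linkage_type a b g h Crank Superrocker"
proof -
  have signs: "T1 a b g h < 0" "T2 a b g h < 0" "T3 a b g h < 0"
      "T4 a b g h > 0" "T5 a b g h < 0"
    using assms by (simp_all add: T1_def T2_def T3_def T4_def T5_def)
  have "T1 a b g h * T2 a b g h \<ge> 0"
    using signs by (simp add: mult_nonpos_nonpos)
  moreover have "T3 a b g h * T4 a b g h \<le> 0"
    using signs by (simp add: mult_nonpos_nonneg)
  moreover have "T4 a b g h * T5 a b g h < 0"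
    using signs by (simp add: mult_pos_neg)
  ultimately show ?thesis
    using signs(1)
    by (simp add: linkage_type_def input_type_Crank_iff output_type_Superrocker_iff)
qed

end
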